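(* Fix a Bergman tree $\mathcal{T}_n$ with parameter $\lambda>0$. There is a constant $C>0$ (depending only on $n$ and $\lambda$) such that for every $M>0$ and all $\alpha,\alpha'\in\mathcal{T}_n$ with $d(\alpha)=d(\alpha')\ge 1$ and $d(c_\alpha,c_{\alpha'})>M$, we have $$(e^M-1)^{1/2}e^{-\lambda d(\alpha)}\le C\,\beta\!\left(\tfrac{c_\alpha}{|c_\alpha|},\tfrac{c_{\alpha'}}{|c_{\alpha'}|}\right).$$
   Context: Notation: $\mathbb{B}_n$ is the open unit ball of $\mathbb{C}^n$, $z\cdot w=\sum_j z_j\overline{w_j}$. For $z\in\mathbb{B}_n$, $\varphi_z$ is the involutive automorphism of $\mathbb{B}_n$ interchanging $0$ and $z$; the Bergman metric is $d(z,w)=\frac12\log\frac{1+|\varphi_z(w)|}{1-|\varphi_z(w)|}$ (so $d(0,z)=\tanh^{-1}|z|$), and $D(z,r)=\{w:d(z,w)<r\}$. The non-isotropic metric on $\partial\mathbb{B}_n$ is $\beta(\zeta,\eta)=|1-\zeta\cdot\eta|^{1/2}$. Bergman tree with parameter $\lambda>0$: for $r>0$ let $S_r=\{z:d(0,z)=r\}$ and for $z\neq0$ let $P_rz$ be the point of $S_r$ on the ray $\{tz:t>0\}$. For each integer $N\ge1$ fix points $z^N_1,\dots,z^N_{J_N}\in S_{\lambda N}$ and a partition of $S_{\lambda N}$ into Borel sets $Q^N_1,\dots,Q^N_{J_N}$ with $B_N(z^N_j,\lambda/2)\subseteq Q^N_j\subseteq B_N(z^N_j,2\lambda)$, where $B_N(z,s)=S_{\lambda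 N}\cap D(z,s)$. Set $K^N_j=\{z:\lambda N\le d(0,z)<\lambda(N+1),\ P_{\lambda N}z\in Q^N_j\}$ with center $c^N_j=P_{\lambda(N+1/2)}z^N_j$; the root is $K_o=\{z:d(0,z)<\lambda\}$ with center $0$. $\mathcal{T}_n$ is the index set consisting of $o$ and all pairs $\alpha=(N,j)$; write $K_\alpha$, $c_\alpha$ and $d(\alpha)=N$ (with $d(o)=0$). The sets $K_\alpha$ partition $\mathbb{B}_n$. Tree structure: $(N+1,i)$ is a child of $(N,j)$ (for $N\ge1$) if $P_{\lambda N}c^{N+1}_i\in Q^N_j$, and every $(1,j)$ is a child of $o$. Write $\beta\ge\alpha$ if $\beta$ equals $\alpha$ or is a descendant of $\alpha$, and $\beta>\alpha$ if moreover $\beta\neq\alpha$; $\mathcal{C}^\ell(\alpha)=\{\beta\ge\alpha:d(\beta)=d(\alpha)+\ell\}$. *)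

theory Defs
  imports "HOL-Analysis.Analysis"
begin

text \<open>Points of C^n are modelled as vectors of type complex^'n, with n = CARD('n).\<close>

definition cdot :: "complex^'n \<Rightarrow> complex^'n \<Rightarrow> complex" where
  "cdot z w = (\<Sum>j\<in>UNIV. z$j * cnj (w$j))"

definition cscale :: "complex \<Rightarrow> complex^'n \<Rightarrow> complex^'n" where
  "cscale c v = (\<chi> i. c * v$i)"

definition unit_ball :: "(complex^'n) set" where
  "unit_ball = {z. norm z < 1}"

definition projP :: "complex^'n \<Rightarrow> complex^'n \<Rightarrow> complex^'n" where
  "projP a z = (if a = 0 then 0 else cscale (cdot z a / cdot a a) a)"

definition projQ :: "complex^'n \<Rightarrow> complex^'n \<Rightarrow> complex^'n" where
  "projQ a z = z - projP a z"

text \<open>The involutive automorphism interchanging 0 and a (Rudin's formula).\<close>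
definition phi :: "complex^'n \<Rightarrow> complex^'n \<Rightarrow> complex^'n" where
  "phi a z = cscale (1 / (1 - cdot z a))
      (a - projP a z - cscale (complex_of_real (sqrt (1 - (norm a)\<^sup>2))) (projQ a z))"

definition bdist :: "complex^'n \<Rightarrow> complex^'n \<Rightarrow> real" where
  "bdist z w = (1/2) * ln ((1 + norm (phi z w)) / (1 - norm (phi z w)))"

definition bball :: "complex^'n \<Rightarrow> real \<Rightarrow> (complex^'n) set" where
  "bball z r = {w \<in> unit_ball. bdist z w < r}"

definition sphereS :: "real \<Rightarrow> (complex^'n) set" where
  "sphereS r = {z \<in> unit_ball. bdist 0 z = r}"

definition rayP :: "real \<Rightarrow> complex^'n \<Rightarrow> complex^'n" where
  "rayP r z = (THE w. w \<in> sphereS r \<and> (\<exists>t>0. w = t *\<^sub>R z))"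

definition nbeta :: "complex^'n \<Rightarrow> complex^'n \<Rightarrow> real" where
  "nbeta \<zeta> \<eta> = sqrt (cmod (1 - cdot \<zeta> \<eta>))"

definition bergman_tree ::
  "real \<Rightarrow> (nat \<Rightarrow> nat) \<Rightarrow> (nat \<Rightarrow> nat \<Rightarrow> complex^'n) \<Rightarrow> (nat \<Rightarrow> nat \<Rightarrow> (complex^'n) set) \<Rightarrow> bool"
  where
  "bergman_tree lam J zs Q \<longleftrightarrow> lam > 0 \<and>
     (\<forall>N\<ge>1.
        (\<forall>j<J N. zs N j \<in> sphereS (lam * real N)) \<and>
        (\<forall>j<J N. Q N j \<in> sets borel) \<and>
        (\<forall>j<J N. \<forall>j'<J N. j \<noteq> j' \<longrightarrow> Q N j \<inter> Q N j' = {}) \<and>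
        (\<Union>j<J N. Q N j) = sphereS (lam * real N) \<and>
        (\<forall>j<J N. sphereS (lam * real N) \<inter> bball (zs N j) (lam / 2) \<subseteq> Q N j \<and>
                 Q N j \<subseteq> sphereS (lam * real N) \<inter> bball (zs N j) (2 * lam)))"

definition center :: "real \<Rightarrow> (nat \<Rightarrow> nat \<Rightarrow> complex^'n) \<Rightarrow> nat \<Rightarrow> nat \<Rightarrow> complex^'n" where
  "center lam zs N j = rayP (lam * (real N + 1/2)) (zs N j)"

end

theory Submission
  imports Defs
begin

(* Everything rests on Rudin's identity 1 - |phi_a z|^2 = (1-|a|^2)(1-|z|^2)/|1-<z,a>|^2,
   which, as |phi_a z| = tanh d(a,z), reads cosh^2 d(a,z) = |1-<z,a>|^2/((1-|a|^2)(1-|z|^2)).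
   For points t zeta, t eta of equal radius it gives cosh d <= 1 + |1-<zeta,eta>|/(1-t^2).
   At the radius of the points z^N_j, which are lam/2-separated (the sets Q^N_j are
   disjoint and contain Bergman balls of radius lam/2), this bounds 1 - tanh^2(lam N) by a
   multiple of |1-<zeta,eta>|; at the radius of the centres, together with e^d <= 2 cosh d
   and 1/(1 - tanh^2 R) = cosh^2 R <= e^(2R), it bounds e^d - 1.  The file proves, in order:
   Hermitian-product algebra, Rudin's identity, hyperbolic-function facts, the Bergman
   distance on spheres, a radial growth bound, two facts on Bergman trees, the theorem. *)

lemma norm_vec_sq: "(norm (z::complex^'n))\<^sup>2 = (\<Sum>i\<in>UNIV. (cmod (z$i))\<^sup>2)"
  unfolding norm_vec_def L2_set_def by (simp add: sum_nonneg)

lemma cdot_self: "cdot z z = complex_of_real ((norm z)\<^sup>2)"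
  unfolding cdot_def norm_vec_sq by (simp add: complex_mult_cnj cmod_def)

lemma cdot_swap: "cdot w z = cnj (cdot z w)"
  unfolding cdot_def by (simp add: mult.commute)

lemma cdot_scaleR: "cdot (x *\<^sub>R a) (y *\<^sub>R b) = complex_of_real (x * y) * cdot a b"
proof -
  have "(x *\<^sub>R a) $ j * cnj ((y *\<^sub>R b) $ j) = complex_of_real (x * y) * (a $ j * cnj (b $ j))" for j
    unfolding vector_scaleR_component by (simp add: scaleR_conv_of_real)
  then show ?thesis unfolding cdot_def by (simp add: sum_distrib_left)
qed

lemma cdot_cscale_diff:
  "cdot (cscale A a - cscale B b) (cscale A a - cscale B b) =
     A * cnj A * cdot a a - A * cnj B * cdot a b - B * cnj A * cdot b a + B * cnj B * cdot b b"
  unfolding cdot_def cscale_def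
  by (simp add: sum_subtractf sum.distrib sum_distrib_left algebra_simps)

lemma norm_cscale: "norm (cscale c v) = cmod c * norm v"
  unfolding norm_vec_def cscale_def by (simp add: norm_mult L2_set_right_distrib)

text \<open>Writing \<open>phi a z\<close> as \<open>v / (1 - <z,a>)\<close>, the numerator satisfies
  \<open>|v|^2 = |1 - <z,a>|^2 - (1 - |a|^2)(1 - |z|^2)\<close>.  The scalar identity below is this
  statement after expanding \<open>|v|^2\<close>, with \<open>m = |a|^2\<close>, \<open>S = sqrt (1 - m)\<close>, \<open>g = <z,a>\<close>,
  \<open>h = cnj g\<close> and \<open>Z = |z|^2\<close>.\<close>

lemma rudin_identity_scalar:
  fixes g h S m Z :: complex
  assumes "m \<noteq> 0" "S * S = 1 - m"
  shows "(1 - g/m + S*(g/m)) * (1 - h/m + S*(h/m)) * m - (1 - g/m + S*(g/m)) * S * h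
         - S * (1 - h/m + S*(h/m)) * g + S * S * Z
         = (1 - g) * (1 - h) - (1 - m) * (1 - Z)"
  using assms by (simp add: field_simps) algebra

lemma rudin_numerator_norm:
  fixes a z :: "complex^'n"
  assumes "a \<noteq> 0" "norm a \<le> 1"
  defines "g \<equiv> cdot z a"
  defines "S \<equiv> complex_of_real (sqrt (1 - (norm a)\<^sup>2))"
  defines "A \<equiv> 1 - g / cdot a a + S * (g / cdot a a)"
  shows "(norm (cscale A a - cscale S z))\<^sup>2
           = (cmod (1 - g))\<^sup>2 - (1 - (norm a)\<^sup>2) * (1 - (norm z)\<^sup>2)"
proof -
  define m where "m = complex_of_real ((norm a)\<^sup>2)"
  define Z where "Z = complex_of_real ((norm z)\<^sup>2)"
  have m0: "m \<noteq> 0" using assms(1) by (simp add: m_def)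
  have "0 \<le> 1 - (norm a)\<^sup>2" using assms(2) by (simp add: power_le_one)
  then have SS: "S * S = 1 - m" by (simp add: S_def m_def flip: of_real_mult)
  have cS: "cnj S = S" by (simp add: S_def)
  have caa: "cdot a a = m" by (simp add: m_def cdot_self)
  have czz: "cdot z z = Z" by (simp add: Z_def cdot_self)
  have caz: "cdot a z = cnj g" by (simp add: g_def cdot_swap[of a z])
  have cA: "cnj A = 1 - cnj g / m + S * (cnj g / m)"
    by (simp add: A_def caa cS m_def)
  have "complex_of_real ((norm (cscale A a - cscale S z))\<^sup>2)
          = cdot (cscale A a - cscale S z) (cscale A a - cscale S z)"
    by (simp add: cdot_self)
  also have "\<dots> = A * cnj A * m - A * S * cnj g - S * cnj A * g + S * S * Z"
    unfolding cdot_cscale_diff caa czz caz cS g_def[symmetric] by (rule refl)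
  also have "\<dots> = (1 - g) * (1 - cnj g) - (1 - m) * (1 - Z)"
    unfolding cA unfolding A_def caa by (rule rudin_identity_scalar[OF m0 SS])
  also have "\<dots> = complex_of_real ((cmod (1 - g))\<^sup>2 - (1 - (norm a)\<^sup>2) * (1 - (norm z)\<^sup>2))"
    unfolding of_real_diff of_real_mult complex_norm_square m_def Z_def of_real_1 by simp
  finally show ?thesis by (simp only: of_real_eq_iff)
qed

lemma phi_zero: "phi 0 z = - z"
  unfolding phi_def projP_def projQ_def cscale_def cdot_def by (simp add: vec_eq_iff)

lemma phi_as_quotient:
  fixes a z :: "complex^'n"
  assumes "norm a \<le> 1"
  obtains v where "phi a z = cscale (1 / (1 - cdot z a)) v"
    and "(norm v)\<^sup>2 = (cmod (1 - cdot z a))\<^sup>2 - (1 - (norm a)\<^sup>2) * (1 - (norm z)\<^sup>2)"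
proof (cases "a = 0")
  case True
  have "phi a z = cscale (1 / (1 - cdot z a)) (- z)"
    unfolding True phi_zero by (simp add: cdot_def cscale_def vec_eq_iff)
  moreover have "(norm (- z))\<^sup>2 = (cmod (1 - cdot z a))\<^sup>2 - (1 - (norm a)\<^sup>2) * (1 - (norm z)\<^sup>2)"
    using True by (simp add: cdot_def)
  ultimately show ?thesis by (rule that)
next
  case False
  define S where "S = complex_of_real (sqrt (1 - (norm a)\<^sup>2))"
  define A where "A = 1 - cdot z a / cdot a a + S * (cdot z a / cdot a a)"
  have "phi a z = cscale (1 / (1 - cdot z a)) (cscale A a - cscale S z)"
    using False unfolding phi_def projP_def projQ_def cscale_def A_def S_def
    by (simp add: vec_eq_iff algebra_simps)
  moreover have "(norm (cscale A a - cscale S z))\<^sup>2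
      = (cmod (1 - cdot z a))\<^sup>2 - (1 - (norm a)\<^sup>2) * (1 - (norm z)\<^sup>2)"
    unfolding A_def S_def using False assms by (rule rudin_numerator_norm)
  ultimately show ?thesis by (rule that)
qed

lemma ball_product_pos:
  "norm (a::'a::real_normed_vector) < 1 \<Longrightarrow> norm (z::'a) < 1 \<Longrightarrow> 0 < (1 - (norm a)\<^sup>2) * (1 - (norm z)\<^sup>2)"
  by (simp add: power_less_one_iff abs_less_iff)

text \<open>Rudin's identity (Theorem 2.2.2 of his book on the unit ball); positivity of
  \<open>|1 - <z,a>|\<close> falls out of the nonnegativity of \<open>|v|^2\<close>.\<close>

lemma phi_norm_sq:
  fixes a z :: "complex^'n"
  assumes "norm a < 1" "norm z < 1"
  shows "cmod (1 - cdot z a) > 0"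
    and "1 - (norm (phi a z))\<^sup>2 = (1 - (norm a)\<^sup>2) * (1 - (norm z)\<^sup>2) / (cmod (1 - cdot z a))\<^sup>2"
proof -
  obtain v where phi: "phi a z = cscale (1 / (1 - cdot z a)) v"
    and v: "(norm v)\<^sup>2 = (cmod (1 - cdot z a))\<^sup>2 - (1 - (norm a)\<^sup>2) * (1 - (norm z)\<^sup>2)"
    using phi_as_quotient assms(1) by (metis less_imp_le)
  have "0 < (cmod (1 - cdot z a))\<^sup>2"
    using v ball_product_pos[OF assms] by (smt (verit) zero_le_power2)
  then show pos: "cmod (1 - cdot z a) > 0" by simp
  have "(norm (phi a z))\<^sup>2 = (norm v)\<^sup>2 / (cmod (1 - cdot z a))\<^sup>2"
    unfolding phi norm_cscale by (simp add: norm_divide power_divide)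
  then show "1 - (norm (phi a z))\<^sup>2 = (1 - (norm a)\<^sup>2) * (1 - (norm z)\<^sup>2) / (cmod (1 - cdot z a))\<^sup>2"
    using pos by (simp add: v field_simps)
qed

lemma norm_phi_lt_1:
  fixes a z :: "complex^'n"
  assumes "norm a < 1" "norm z < 1"
  shows "norm (phi a z) < 1"
proof -
  have "0 < 1 - (norm (phi a z))\<^sup>2"
    unfolding phi_norm_sq(2)[OF assms] using phi_norm_sq(1)[OF assms] ball_product_pos[OF assms]
    by simp
  then show ?thesis by (simp add: power_less_one_iff abs_less_iff)
qed

lemma tanh_artanh_real:
  fixes x :: real
  assumes "\<bar>x\<bar> < 1"
  shows "tanh (artanh x) = x"
proof -
  define q where "q = (1 + x) / (1 - x)"
  have q0: "q > 0" using assms by (simp add: q_def)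
  have "artanh x = ln (sqrt q)" using q0 by (simp add: artanh_def q_def ln_sqrt)
  then have "tanh (artanh x) = (q - 1) / (q + 1)" using q0 by (simp add: tanh_ln_real)
  also have "\<dots> = x" using assms by (simp add: q_def field_simps)
  finally show ?thesis .
qed

lemma one_minus_tanh_sq: "1 - (tanh x)\<^sup>2 = 1 / (cosh x)\<^sup>2" for x :: real
  by (simp add: tanh_def power_divide divide_simps sinh_square_eq)

lemma exp_le_two_cosh: "exp x \<le> 2 * cosh x" for x :: real
  by (simp add: cosh_field_def)

lemma cosh_le_exp: "x \<ge> 0 \<Longrightarrow> cosh x \<le> exp x" for x :: real
  by (simp add: cosh_field_def)

lemma cosh_gt_one: "x \<noteq> 0 \<Longrightarrow> cosh x > 1" for x :: real
  using cosh_real_ge_1[of x] cosh_real_one_iff[of x] by linarith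

text \<open>The Bergman distance is \<open>artanh |phi_a(z)|\<close>, so Rudin's identity computes its \<open>cosh\<close>.\<close>

lemma bdist_artanh: "bdist z w = artanh (norm (phi z w))"
  by (simp add: bdist_def artanh_def)

lemma tanh_bdist:
  fixes a z :: "complex^'n"
  assumes "norm a < 1" "norm z < 1"
  shows "tanh (bdist a z) = norm (phi a z)"
  unfolding bdist_artanh using norm_phi_lt_1[OF assms] by (simp add: tanh_artanh_real)

lemma cosh_bdist_sq:
  fixes a z :: "complex^'n"
  assumes "norm a < 1" "norm z < 1"
  shows "(cosh (bdist a z))\<^sup>2 = (cmod (1 - cdot z a))\<^sup>2 / ((1 - (norm a)\<^sup>2) * (1 - (norm z)\<^sup>2))"
proof -
  have "1 / (cosh (bdist a z))\<^sup>2 = (1 - (norm a)\<^sup>2) * (1 - (norm z)\<^sup>2) / (cmod (1 - cdot z a))\<^sup>2"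
    using one_minus_tanh_sq[of "bdist a z"] phi_norm_sq(2)[OF assms] tanh_bdist[OF assms] by simp
  then show ?thesis
    using ball_product_pos[OF assms] phi_norm_sq(1)[OF assms] by (simp add: field_simps)
qed

lemma bdist_self:
  fixes z :: "complex^'n"
  assumes "norm z < 1"
  shows "bdist z z = 0"
proof -
  have p: "0 < 1 - (norm z)\<^sup>2" using assms by (simp add: abs_square_less_1)
  have "cmod (1 - cdot z z) = 1 - (norm z)\<^sup>2"
    unfolding cdot_self using p by (metis abs_of_pos norm_of_real of_real_1 of_real_diff)
  then have "(cosh (bdist z z))\<^sup>2 = 1\<^sup>2"
    using cosh_bdist_sq[OF assms assms] p by (simp add: power2_eq_square)
  then have "cosh (bdist z z) = 1" by (rule power2_eq_imp_eq) simp_all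
  then show ?thesis by simp
qed

lemma sphereS_iff: "w \<in> sphereS R \<longleftrightarrow> norm w = tanh R"
proof -
  have d0: "bdist 0 w = artanh (norm w)" by (simp add: bdist_artanh phi_zero)
  show ?thesis
  proof
    assume "w \<in> sphereS R"
    then have "norm w < 1" "bdist 0 w = R" unfolding sphereS_def unit_ball_def by auto
    then show "norm w = tanh R" using d0 tanh_artanh_real[of "norm w"] by simp
  next
    assume w: "norm w = tanh R"
    then have "norm w < 1" using tanh_real_lt_1 by simp
    moreover have "bdist 0 w = R" unfolding d0 w by (rule artanh_tanh_real)
    ultimately show "w \<in> sphereS R" unfolding sphereS_def unit_ball_def by auto
  qed
qed

lemma rayP_eq:
  fixes z :: "complex^'n"
  assumes "R > 0" "z \<noteq> 0"
  shows "rayP R z = tanh R *\<^sub>R sgn z"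
  unfolding rayP_def
proof (rule the_equality)
  show "tanh R *\<^sub>R sgn z \<in> sphereS R \<and> (\<exists>t>0. tanh R *\<^sub>R sgn z = t *\<^sub>R z)"
    using assms by (auto simp: sphereS_iff sgn_div_norm intro!: exI[of _ "tanh R / norm z"])
next
  fix w assume "w \<in> sphereS R \<and> (\<exists>t>0. w = t *\<^sub>R z)"
  then obtain t where t: "t > 0" "w = t *\<^sub>R z" and "norm w = tanh R" by (auto simp: sphereS_iff)
  then have "t = tanh R / norm z" using assms by (simp add: field_simps)
  then show "w = tanh R *\<^sub>R sgn z" using t by (simp add: sgn_div_norm divide_inverse)
qed

lemma cmod_one_minus_convex:
  fixes w :: complex
  assumes "0 \<le> s" "s \<le> 1"
  shows "cmod (1 - complex_of_real s * w) \<le> (1 - s) + cmod (1 - w)"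
proof -
  have e: "1 - complex_of_real s * w = complex_of_real (1 - s) + complex_of_real s * (1 - w)"
    by (simp add: algebra_simps)
  have "cmod (1 - complex_of_real s * w)
          \<le> cmod (complex_of_real (1 - s)) + cmod (complex_of_real s * (1 - w))"
    unfolding e by (rule norm_triangle_ineq)
  also have "\<dots> = (1 - s) + s * cmod (1 - w)" using assms by (simp only: norm_mult norm_of_real)
  also have "\<dots> \<le> (1 - s) + cmod (1 - w)" using assms by (simp add: mult_left_le_one_le)
  finally show ?thesis .
qed

lemma cosh_bdist_radial:
  fixes \<zeta> \<eta> :: "complex^'n"
  assumes "norm \<zeta> = 1" "norm \<eta> = 1" "0 \<le> t" "t < 1"
  shows "cosh (bdist (t *\<^sub>R \<zeta>) (t *\<^sub>R \<eta>)) \<le> 1 + cmod (1 - cdot \<zeta> \<eta>) / (1 - t\<^sup>2)"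
proof -
  have n: "norm (t *\<^sub>R \<zeta>) = t" "norm (t *\<^sub>R \<eta>) = t" using assms by simp_all
  have p: "0 < 1 - t\<^sup>2" using assms by (simp add: power_less_one_iff)
  have "(cosh (bdist (t *\<^sub>R \<zeta>) (t *\<^sub>R \<eta>)))\<^sup>2
          = (cmod (1 - complex_of_real (t\<^sup>2) * cdot \<eta> \<zeta>) / (1 - t\<^sup>2))\<^sup>2"
    using cosh_bdist_sq[of "t *\<^sub>R \<zeta>" "t *\<^sub>R \<eta>"] assms
    by (simp add: n cdot_scaleR power2_eq_square power_divide)
  then have "cosh (bdist (t *\<^sub>R \<zeta>) (t *\<^sub>R \<eta>))
               = cmod (1 - complex_of_real (t\<^sup>2) * cdot \<eta> \<zeta>) / (1 - t\<^sup>2)"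
    using p by (simp add: power2_eq_iff_nonneg)
  also have "\<dots> \<le> ((1 - t\<^sup>2) + cmod (1 - cdot \<eta> \<zeta>)) / (1 - t\<^sup>2)"
    using p assms by (intro divide_right_mono cmod_one_minus_convex) (simp_all add: power_le_one)
  also have "cmod (1 - cdot \<eta> \<zeta>) = cmod (1 - cdot \<zeta> \<eta>)"
    by (metis cdot_swap complex_cnj_diff complex_cnj_one complex_mod_cnj)
  finally show ?thesis using p by (simp add: add_divide_distrib)
qed

text \<open>The separation gives \<open>1 - tanh^2 R1 \<le> 1 - tanh^2 R0 \<le> K |1 - <zeta,eta>|\<close>, which absorbs the
  additive constant in \<open>e^d \<le> 2 cosh d\<close>.\<close>

lemma radial_growth_bound:
  fixes \<zeta> \<eta> :: "complex^'n"
  assumes unit: "norm \<zeta> = 1" "norm \<eta> = 1"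
    and R: "0 \<le> R0" "R0 \<le> R1"
    and sep: "0 < \<delta>" "\<delta> \<le> bdist (tanh R0 *\<^sub>R \<zeta>) (tanh R0 *\<^sub>R \<eta>)"
  shows "exp (bdist (tanh R1 *\<^sub>R \<zeta>) (tanh R1 *\<^sub>R \<eta>)) - 1
           \<le> (2 + 1 / (cosh \<delta> - 1)) * exp (2 * R1) * cmod (1 - cdot \<zeta> \<eta>)"
proof -
  define B where "B = cmod (1 - cdot \<zeta> \<eta>)"
  define K where "K = 1 / (cosh \<delta> - 1)"
  define s where "s = tanh R0"
  define r where "r = tanh R1"
  have s: "0 \<le> s" "s < 1" and r: "s \<le> r" "r < 1"
    using R by (simp_all add: s_def r_def tanh_real_lt_1)
  have ps: "0 < 1 - s\<^sup>2" and pr: "0 < 1 - r\<^sup>2"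
    using s r by (simp_all add: power_less_one_iff)
  have \<delta>1: "cosh \<delta> > 1" using sep(1) by (simp add: cosh_gt_one)
  have "cosh \<delta> \<le> cosh (bdist (s *\<^sub>R \<zeta>) (s *\<^sub>R \<eta>))"
    using sep by (simp add: s_def cosh_real_nonneg_le_iff)
  also have "\<dots> \<le> 1 + B / (1 - s\<^sup>2)"
    unfolding B_def using unit s by (rule cosh_bdist_radial)
  finally have "(cosh \<delta> - 1) * (1 - s\<^sup>2) \<le> B" using ps by (simp add: field_simps)
  then have "1 - s\<^sup>2 \<le> K * B" using \<delta>1 by (simp add: K_def pos_le_divide_eq mult.commute)
  moreover have "s\<^sup>2 \<le> r\<^sup>2" using s r by (simp add: power_mono)
  ultimately have one_le: "1 \<le> K * B / (1 - r\<^sup>2)" using pr by (simp add: field_simps)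
  have "exp (bdist (r *\<^sub>R \<zeta>) (r *\<^sub>R \<eta>)) \<le> 2 * cosh (bdist (r *\<^sub>R \<zeta>) (r *\<^sub>R \<eta>))"
    by (rule exp_le_two_cosh)
  also have "\<dots> \<le> 2 * (1 + B / (1 - r\<^sup>2))"
    unfolding B_def using cosh_bdist_radial[OF unit, of r] s r by simp
  finally have upper: "exp (bdist (r *\<^sub>R \<zeta>) (r *\<^sub>R \<eta>)) \<le> 2 * (1 + B / (1 - r\<^sup>2))" .
  have split: "(2 + K) * B / (1 - r\<^sup>2) = K * B / (1 - r\<^sup>2) + 2 * (B / (1 - r\<^sup>2))"
    by (simp add: add_divide_distrib distrib_right)
  have "exp (bdist (r *\<^sub>R \<zeta>) (r *\<^sub>R \<eta>)) - 1 \<le> (2 + K) * B / (1 - r\<^sup>2)"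
    unfolding split using upper one_le by argo
  also have "\<dots> = (2 + K) * B * (cosh R1)\<^sup>2"
    using one_minus_tanh_sq[of R1] by (simp add: r_def)
  also have "\<dots> \<le> (2 + K) * B * exp (2 * R1)"
  proof -
    have "(cosh R1)\<^sup>2 \<le> (exp R1)\<^sup>2" using R by (intro power_mono cosh_le_exp) simp_all
    moreover have "0 \<le> (2 + K) * B" using \<delta>1 by (simp add: K_def B_def)
    ultimately show ?thesis by (simp add: mult_left_mono flip: exp_double)
  qed
  finally show ?thesis by (simp add: r_def K_def B_def mult_ac)
qed

text \<open>In a Bergman tree, distinct points \<open>z^N_j\<close> of one level are \<open>lam/2\<close>-separated: each
  \<open>Q^N_j\<close> contains the \<open>lam/2\<close>-ball around its own point, and the \<open>Q^N_j\<close> are disjoint.\<close>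

lemma tree_points_separated:
  assumes bt: "bergman_tree lam J zs Q" and N: "N \<ge> 1"
    and j: "j < J N" and j': "j' < J N" and "j \<noteq> j'"
  shows "lam / 2 \<le> bdist (zs N j) (zs N j')"
proof (rule ccontr)
  let ?S = "sphereS (lam * real N)"
  have S: "zs N j' \<in> ?S" and lam: "lam > 0" and disj: "Q N j \<inter> Q N j' = {}"
    using bt N j j' \<open>j \<noteq> j'\<close> unfolding bergman_tree_def by auto
  then have unit: "zs N j' \<in> unit_ball" by (simp add: sphereS_def)
  assume "\<not> lam / 2 \<le> bdist (zs N j) (zs N j')"
  then have "zs N j' \<in> ?S \<inter> bball (zs N j) (lam / 2)"
    using S unit by (simp add: bball_def)
  then have "zs N j' \<in> Q N j" using bt N j unfolding bergman_tree_def by blast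
  moreover have "zs N j' \<in> ?S \<inter> bball (zs N j') (lam / 2)"
    using S unit lam bdist_self[of "zs N j'"] by (simp add: bball_def unit_ball_def)
  then have "zs N j' \<in> Q N j'" using bt N j' unfolding bergman_tree_def by blast
  ultimately show False using disj by blast
qed

lemma tree_point_polar:
  assumes bt: "bergman_tree lam J zs Q" and N: "N \<ge> 1" and j: "j < J N"
  shows "norm (sgn (zs N j)) = 1"
    and "zs N j = tanh (lam * real N) *\<^sub>R sgn (zs N j)"
    and "center lam zs N j = tanh (lam * (real N + 1/2)) *\<^sub>R sgn (zs N j)"
proof -
  have lam: "lam > 0" and "zs N j \<in> sphereS (lam * real N)"
    using bt N j unfolding bergman_tree_def by auto
  then have n: "norm (zs N j) = tanh (lam * real N)" by (simp add: sphereS_iff)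
  moreover have "tanh (lam * real N) > 0" using lam N by simp
  ultimately have z0: "zs N j \<noteq> 0" by auto
  then show "norm (sgn (zs N j)) = 1" by (simp add: norm_sgn)
  show "zs N j = tanh (lam * real N) *\<^sub>R sgn (zs N j)"
    using z0 by (simp add: n[symmetric] sgn_div_norm)
  show "center lam zs N j = tanh (lam * (real N + 1/2)) *\<^sub>R sgn (zs N j)"
    unfolding center_def using lam z0 by (simp add: rayP_eq add_pos_nonneg)
qed

lemma tree_centers_bound:
  assumes bt: "bergman_tree lam J zs Q" and N: "N \<ge> 1"
    and j: "j < J N" and j': "j' < J N"
    and M: "0 < M" "M < bdist (center lam zs N j) (center lam zs N j')"
  shows "exp M - 1 \<le> (2 + 1 / (cosh (lam / 2) - 1)) * exp lam * (exp (lam * real N))\<^sup>2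
                       * (nbeta (sgn (center lam zs N j)) (sgn (center lam zs N j')))\<^sup>2"
proof -
  define \<zeta> where "\<zeta> = sgn (zs N j)"
  define \<eta> where "\<eta> = sgn (zs N j')"
  note polar = tree_point_polar[OF bt N j, folded \<zeta>_def] tree_point_polar[OF bt N j', folded \<eta>_def]
  have lam: "lam > 0" using bt by (simp add: bergman_tree_def)
  have "norm (center lam zs N j) < 1"
    using polar(1,3) tanh_real_bounds[of "lam * (real N + 1/2)"] by (simp add: abs_less_iff)
  then have "j \<noteq> j'" using M bdist_self by force
  then have sep: "lam / 2 \<le> bdist (tanh (lam * real N) *\<^sub>R \<zeta>) (tanh (lam * real N) *\<^sub>R \<eta>)"
    using tree_points_separated[OF bt N j j'] polar by simp
  have dirs: "sgn (center lam zs N j) = \<zeta>" "sgn (center lam zs N j') = \<eta>"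
    using polar lam by (simp_all add: add_pos_nonneg sgn_scaleR sgn_div_norm)
  have "exp M - 1 \<le> exp (bdist (center lam zs N j) (center lam zs N j')) - 1"
    using M by simp
  also have "\<dots> \<le> (2 + 1 / (cosh (lam / 2) - 1)) * exp (2 * (lam * (real N + 1/2)))
                   * cmod (1 - cdot \<zeta> \<eta>)"
    unfolding polar(3,6) by (rule radial_growth_bound[OF polar(1,4)]) (use lam sep in simp_all)
  also have "exp (2 * (lam * (real N + 1/2))) = exp lam * (exp (lam * real N))\<^sup>2"
    by (simp add: algebra_simps flip: exp_add exp_double)
  finally show ?thesis unfolding dirs nbeta_def by simp
qed

theorem lemma2p3:
  fixes lam :: real
  assumes "lam > 0"
  shows "\<exists>C>0. \<forall>(J::nat \<Rightarrow> nat) (zs::nat \<Rightarrow> nat \<Rightarrow> complex^'n) Q.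
           bergman_tree lam J zs Q \<longrightarrow>
           (\<forall>M>0. \<forall>N\<ge>1. \<forall>j<J N. \<forall>j'<J N.
              bdist (center lam zs N j) (center lam zs N j') > M \<longrightarrow>
              sqrt (exp M - 1) * exp (- lam * real N)
                \<le> C * nbeta (inverse (norm (center lam zs N j)) *\<^sub>R center lam zs N j)
                            (inverse (norm (center lam zs N j')) *\<^sub>R center lam zs N j'))"
proof -
  define C where "C = sqrt ((2 + 1 / (cosh (lam / 2) - 1)) * exp lam)"
  have "cosh (lam / 2) > 1" using assms by (simp add: cosh_gt_one)
  then have C0: "C > 0" unfolding C_def by (simp add: add_pos_pos)
  show ?thesis
  proof (intro exI[of _ C] conjI allI impI C0)
    fix J :: "nat \<Rightarrow> nat" and zs :: "nat \<Rightarrow> nat \<Rightarrow> complex^'n" and Q M N j j'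
    assume "bergman_tree lam J zs Q" "0 < M" "1 \<le> N" "j < J N" "j' < J N"
      "M < bdist (center lam zs N j) (center lam zs N j')"
    then have "exp M - 1 \<le> (C * exp (lam * real N)
                 * nbeta (sgn (center lam zs N j)) (sgn (center lam zs N j')))\<^sup>2"
      using tree_centers_bound \<open>cosh (lam / 2) > 1\<close> by (simp add: C_def power_mult_distrib)
    then have "sqrt (exp M - 1) \<le> C * exp (lam * real N)
                 * nbeta (sgn (center lam zs N j)) (sgn (center lam zs N j'))"
      by (rule real_le_lsqrt[rotated]) (simp add: C0 nbeta_def less_imp_le)
    then show "sqrt (exp M - 1) * exp (- lam * real N)
        \<le> C * nbeta (inverse (norm (center lam zs N j)) *\<^sub>R center lam zs N j)
                    (inverse (norm (center lam zs N j')) *\<^sub>R center lam zs N j')"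
      by (simp add: sgn_div_norm exp_minus field_simps)
  qed
qed

end
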